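(* Let $(Y,\preceq,\prec,\to)$ be a solid vector space. Then the collection of all open intervals $(a,b)=\{x\in Y: a\prec x\prec b\}$, where $a,b\in Y$ with $a\prec b$, is a basis for a Hausdorff topology on $Y$.
   Context: Vector space with convergence: a real vector space $Y$ with a relation $\to$ between sequences in $Y$ and points of $Y$ (uniqueness of limits not assumed) such that (C1) $x_n\to x$, $y_n\to y$ imply $x_n+y_n\to x+y$; (C2) $x_n\to x$, $\lambda\in\mathbb R$ imply $\lambda x_n\to\lambda x$; (C3) $\lambda_n\to\lambda$ in $\mathbb R$ imply $\lambda_n x\to\lambda x$. $A\subseteq Y$ is open if $x_n\to x\in A$ implies $x_n\in A$ for all but finitely many $n$; closed if $x_n\to x$, $x_n\in A$ $\forall n$ imply $x\in A$; $A^\circ$ is the union of all open subsets of $A$. A cone is a nonempty closed $K$ with $\lambda K\subseteq K$ ($\lambda\ge0$), $K+K\subseteq K$, $K\cap(-K)=\{0\}$; solid if $K\neq\{0\}$ and $K^\circ\neq\emptyset$. A vector ordering is a partial order $\preceq$ with (V1) $x\preceq y\Rightarrow x+z\preceq y+z$; (V2) $\lambda\ge0$, $x\preceq y\Rightarrow\lambda x\preceq\lambda y$; (V3) $x_n\to x$, $y_n\to y$, $x_n\preceq y_n$ $\forall n\Rightarrow x\preceq y$. A solid vector space $(Y,\preceq,\prec,\to)$ is such an ordered vector space whose positive cone $K=\{x:x\succeq0\}$ is solid, with $x\prec y$ iff $y-x\in K^\circ$. *)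

theory Defs
  imports "HOL-Analysis.Analysis"
begin

definition conv_space :: "((nat \<Rightarrow> 'a::real_vector) \<Rightarrow> 'a \<Rightarrow> bool) \<Rightarrow> bool" where
  "conv_space conv \<longleftrightarrow>
     (\<forall>xs x ys y. conv xs x \<and> conv ys y \<longrightarrow> conv (\<lambda>n. xs n + ys n) (x + y)) \<and>
     (\<forall>xs x (c::real). conv xs x \<longrightarrow> conv (\<lambda>n. c *\<^sub>R xs n) (c *\<^sub>R x)) \<and>
     (\<forall>(cs::nat \<Rightarrow> real) c x. cs \<longlonglongrightarrow> c \<longrightarrow> conv (\<lambda>n. cs n *\<^sub>R x) (c *\<^sub>R x))"

definition c_open :: "((nat \<Rightarrow> 'a) \<Rightarrow> 'a \<Rightarrow> bool) \<Rightarrow> 'a set \<Rightarrow> bool" where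
  "c_open conv A \<longleftrightarrow>
     (\<forall>xs x. conv xs x \<and> x \<in> A \<longrightarrow> (\<forall>\<^sub>F n in sequentially. xs n \<in> A))"

definition c_closed :: "((nat \<Rightarrow> 'a) \<Rightarrow> 'a \<Rightarrow> bool) \<Rightarrow> 'a set \<Rightarrow> bool" where
  "c_closed conv A \<longleftrightarrow> (\<forall>xs x. conv xs x \<and> (\<forall>n. xs n \<in> A) \<longrightarrow> x \<in> A)"

definition c_interior :: "((nat \<Rightarrow> 'a) \<Rightarrow> 'a \<Rightarrow> bool) \<Rightarrow> 'a set \<Rightarrow> 'a set" where
  "c_interior conv A = \<Union>{U. U \<subseteq> A \<and> c_open conv U}"

definition c_cone :: "((nat \<Rightarrow> 'a::real_vector) \<Rightarrow> 'a \<Rightarrow> bool) \<Rightarrow> 'a set \<Rightarrow> bool" where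
  "c_cone conv K \<longleftrightarrow> K \<noteq> {} \<and> c_closed conv K \<and>
     (\<forall>(c::real) x. c \<ge> 0 \<and> x \<in> K \<longrightarrow> c *\<^sub>R x \<in> K) \<and>
     (\<forall>x y. x \<in> K \<and> y \<in> K \<longrightarrow> x + y \<in> K) \<and>
     K \<inter> uminus ` K = {0}"

definition solid_cone :: "((nat \<Rightarrow> 'a::real_vector) \<Rightarrow> 'a \<Rightarrow> bool) \<Rightarrow> 'a set \<Rightarrow> bool" where
  "solid_cone conv K \<longleftrightarrow> c_cone conv K \<and> K \<noteq> {0} \<and> c_interior conv K \<noteq> {}"

definition vector_ordering ::
  "((nat \<Rightarrow> 'a::real_vector) \<Rightarrow> 'a \<Rightarrow> bool) \<Rightarrow> ('a \<Rightarrow> 'a \<Rightarrow> bool) \<Rightarrow> bool" where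
  "vector_ordering conv le \<longleftrightarrow>
     (\<forall>x. le x x) \<and> (\<forall>x y. le x y \<and> le y x \<longrightarrow> x = y) \<and>
     (\<forall>x y z. le x y \<and> le y z \<longrightarrow> le x z) \<and>
     (\<forall>x y z. le x y \<longrightarrow> le (x + z) (y + z)) \<and>
     (\<forall>(c::real) x y. c \<ge> 0 \<and> le x y \<longrightarrow> le (c *\<^sub>R x) (c *\<^sub>R y)) \<and>
     (\<forall>xs x ys y. conv xs x \<and> conv ys y \<and> (\<forall>n. le (xs n) (ys n)) \<longrightarrow> le x y)"

definition solid_vector_space ::
  "((nat \<Rightarrow> 'a::real_vector) \<Rightarrow> 'a \<Rightarrow> bool) \<Rightarrow> ('a \<Rightarrow> 'a \<Rightarrow> bool) \<Rightarrow> ('a \<Rightarrow> 'a \<Rightarrow> bool) \<Rightarrow> bool" where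
  "solid_vector_space conv le lt \<longleftrightarrow>
     conv_space conv \<and> vector_ordering conv le \<and>
     solid_cone conv {x. le 0 x} \<and>
     (\<forall>x y. lt x y \<longleftrightarrow> y - x \<in> c_interior conv {x. le 0 x})"

definition open_interval :: "('a \<Rightarrow> 'a \<Rightarrow> bool) \<Rightarrow> 'a \<Rightarrow> 'a \<Rightarrow> 'a set" where
  "open_interval lt a b = {x. lt a x \<and> lt x b}"

end

theory Submission
  imports Defs
begin

text \<open>
  Write \<open>K\<close> for the positive cone and \<open>K\<^sup>\<circ>\<close> for its interior, so that \<open>a \<prec> b\<close> means
  \<open>b - a \<in> K\<^sup>\<circ>\<close>. Translations and positive dilations preserve convergence, hence \<open>K\<^sup>\<circ>\<close> is
  stable under adding elements of \<open>K\<close> and under positive scaling; in particular \<open>\<prec>\<close> is transitive.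
  Fix \<open>e \<in> K\<^sup>\<circ>\<close>. Every point \<open>x\<close> lies in the interval \<open>(x - r e, x + r e)\<close> for \<open>r > 0\<close>.
  Since \<open>p + t e \<rightarrow> p\<close> for \<open>t \<rightarrow> 0\<close>, a point of the open set \<open>K\<^sup>\<circ>\<close> stays in \<open>K\<^sup>\<circ>\<close> under small
  perturbations along \<open>e\<close>, so such intervals around \<open>x\<close> shrink into any two basic intervals containing
  \<open>x\<close>. For \<open>x \<noteq> y\<close> one of \<open>y - x\<close>, \<open>x - y\<close> lies outside the closed cone \<open>K\<close>, say \<open>d\<close>; then
  \<open>d + 2 r e \<notin> K\<^sup>\<circ>\<close> for some \<open>r > 0\<close>, which is exactly what makes the intervals of radius \<open>r\<close>
  around \<open>x\<close> and \<open>y\<close> disjoint.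
\<close>

lemma openin_topology_arbitrary_union_of:
  assumes "\<And>I J x. I \<in> \<B> \<Longrightarrow> J \<in> \<B> \<Longrightarrow> x \<in> I \<inter> J \<Longrightarrow> \<exists>V\<in>\<B>. x \<in> V \<and> V \<subseteq> I \<inter> J"
  shows "openin (topology (arbitrary union_of (\<lambda>I. I \<in> \<B>))) U \<longleftrightarrow> (\<exists>\<U>. \<U> \<subseteq> \<B> \<and> U = \<Union>\<U>)"
proof -
  have "istopology (arbitrary union_of (\<lambda>I. I \<in> \<B>))"
    unfolding istopology_base_eq arbitrary_union_of_alt using assms by blast
  then show ?thesis
    by (auto simp: union_of_def arbitrary_def)
qed

lemma Hausdorff_topology_from_basis:
  assumes Int: "\<And>I J x. I \<in> \<B> \<Longrightarrow> J \<in> \<B> \<Longrightarrow> x \<in> I \<inter> J \<Longrightarrow> \<exists>V\<in>\<B>. x \<in> V \<and> V \<subseteq> I \<inter> J"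
    and cover: "\<And>x. \<exists>I\<in>\<B>. x \<in> I"
    and separate: "\<And>x y. x \<noteq> y \<Longrightarrow> \<exists>I\<in>\<B>. \<exists>J\<in>\<B>. x \<in> I \<and> y \<in> J \<and> I \<inter> J = {}"
  shows "\<exists>T. topspace T = UNIV \<and> (\<forall>U. openin T U \<longleftrightarrow> (\<exists>\<U>. \<U> \<subseteq> \<B> \<and> U = \<Union>\<U>)) \<and>
             Hausdorff_space T"
proof -
  define T where "T = topology (arbitrary union_of (\<lambda>I. I \<in> \<B>))"
  have openin_T: "openin T U \<longleftrightarrow> (\<exists>\<U>. \<U> \<subseteq> \<B> \<and> U = \<Union>\<U>)" for U
    unfolding T_def by (rule openin_topology_arbitrary_union_of[OF Int])
  have "UNIV = \<Union>\<B>"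
    using cover by blast
  then have "topspace T = UNIV"
    using openin_T openin_subset by blast
  moreover have "openin T I" if "I \<in> \<B>" for I
    unfolding openin_T using that by (intro exI[of _ "{I}"]) simp
  then have "Hausdorff_space T"
    unfolding Hausdorff_space_def disjnt_def by (meson separate)
  ultimately show ?thesis
    using openin_T by blast
qed

lemma c_openD: "c_open conv A \<Longrightarrow> conv xs x \<Longrightarrow> x \<in> A \<Longrightarrow> \<forall>\<^sub>F n in sequentially. xs n \<in> A"
  unfolding c_open_def by blast

lemma c_interior_subset: "c_interior conv A \<subseteq> A"
  unfolding c_interior_def by blast

lemma c_interior_maximal: "U \<subseteq> A \<Longrightarrow> c_open conv U \<Longrightarrow> U \<subseteq> c_interior conv A"
  unfolding c_interior_def by blast

lemma c_open_c_interior: "c_open conv (c_interior conv A)"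
  unfolding c_open_def
proof (intro allI impI)
  fix xs x assume "conv xs x \<and> x \<in> c_interior conv A"
  then obtain U where "conv xs x" "x \<in> U" "U \<subseteq> A" "c_open conv U"
    unfolding c_interior_def by blast
  then have "\<forall>\<^sub>F n in sequentially. xs n \<in> U"
    by (blast intro: c_openD)
  with c_interior_maximal[OF \<open>U \<subseteq> A\<close> \<open>c_open conv U\<close>]
  show "\<forall>\<^sub>F n in sequentially. xs n \<in> c_interior conv A"
    by (auto elim: eventually_mono)
qed

lemma c_open_vimage:
  assumes "\<And>xs x. conv xs x \<Longrightarrow> conv (\<lambda>n. f (xs n)) (f x)" and "c_open conv U"
  shows "c_open conv (f -` U)"
  using assms unfolding c_open_def by auto

lemma conv_space_add:
  "conv_space conv \<Longrightarrow> conv xs x \<Longrightarrow> conv ys y \<Longrightarrow> conv (\<lambda>n. xs n + ys n) (x + y)"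
  unfolding conv_space_def by blast

lemma conv_space_scaleR:
  "conv_space conv \<Longrightarrow> conv xs x \<Longrightarrow> conv (\<lambda>n. c *\<^sub>R xs n) (c *\<^sub>R x)"
  unfolding conv_space_def by blast

lemma conv_space_scaleR_left:
  "conv_space conv \<Longrightarrow> cs \<longlonglongrightarrow> c \<Longrightarrow> conv (\<lambda>n. cs n *\<^sub>R x) (c *\<^sub>R x)"
  unfolding conv_space_def by blast

lemma conv_space_const: "conv_space conv \<Longrightarrow> conv (\<lambda>n. x) x"
  using conv_space_scaleR_left[of conv "\<lambda>n. 1" 1 x] by simp

lemma conv_space_add_const:
  "conv_space conv \<Longrightarrow> conv xs x \<Longrightarrow> conv (\<lambda>n. xs n + a) (x + a)"
  using conv_space_add conv_space_const by blast

lemma conv_space_perturb: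
  assumes "conv_space conv" "t \<longlonglongrightarrow> 0"
  shows "conv (\<lambda>n. x + t n *\<^sub>R e) x"
  using conv_space_add[OF assms(1) conv_space_const[OF assms(1)]
      conv_space_scaleR_left[OF assms], of x e]
  by simp

locale solid_space =
  fixes conv :: "(nat \<Rightarrow> 'a::real_vector) \<Rightarrow> 'a \<Rightarrow> bool"
    and le lt :: "'a \<Rightarrow> 'a \<Rightarrow> bool"
  assumes solid: "solid_vector_space conv le lt"
begin

abbreviation K :: "'a set" where "K \<equiv> {x. le 0 x}"

abbreviation K_int :: "'a set" where "K_int \<equiv> c_interior conv K"

definition intervals :: "'a set set" where
  "intervals = {open_interval lt a b | a b. lt a b}"

lemma conv_space: "conv_space conv"
  using solid unfolding solid_vector_space_def by blast

lemma lt_iff: "lt x y \<longleftrightarrow> y - x \<in> K_int"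
  using solid unfolding solid_vector_space_def by blast

lemma cone: "c_cone conv K"
  using solid unfolding solid_vector_space_def solid_cone_def by blast

lemma K_int_nonempty: "K_int \<noteq> {}"
  using solid unfolding solid_vector_space_def solid_cone_def by blast

lemma K_add: "x \<in> K \<Longrightarrow> y \<in> K \<Longrightarrow> x + y \<in> K"
  using cone unfolding c_cone_def by blast

lemma K_scaleR: "0 \<le> c \<Longrightarrow> x \<in> K \<Longrightarrow> c *\<^sub>R x \<in> K"
  using cone unfolding c_cone_def by blast

lemma K_antisym:
  assumes "x \<in> K" "- x \<in> K"
  shows "x = 0"
proof -
  have "x \<in> K \<inter> uminus ` K"
    using assms image_eqI[of x uminus "- x"] by simp
  then show ?thesis
    using cone unfolding c_cone_def by blast
qed

lemma K_closed: "conv xs x \<Longrightarrow> (\<And>n. xs n \<in> K) \<Longrightarrow> x \<in> K"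
  using cone unfolding c_cone_def c_closed_def by blast

lemma K_int_subset: "K_int \<subseteq> K"
  by (rule c_interior_subset)

lemma K_int_add_K:
  assumes "p \<in> K_int" "k \<in> K"
  shows "p + k \<in> K_int"
proof -
  let ?U = "(\<lambda>z. z + - k) -` K_int"
  have "c_open conv ?U"
    by (intro c_open_vimage c_open_c_interior conv_space_add_const[OF conv_space])
  moreover have "?U \<subseteq> K"
  proof
    fix z assume "z \<in> ?U"
    then have "z - k \<in> K" using K_int_subset by auto
    then show "z \<in> K" using K_add[OF _ \<open>k \<in> K\<close>] by fastforce
  qed
  ultimately have "?U \<subseteq> K_int" by (rule c_interior_maximal[rotated])
  then show ?thesis using assms(1) by auto
qed

lemma K_int_add: "p \<in> K_int \<Longrightarrow> q \<in> K_int \<Longrightarrow> p + q \<in> K_int"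
  using K_int_add_K K_int_subset by blast

lemma K_int_scaleR:
  assumes "0 < c" "p \<in> K_int"
  shows "c *\<^sub>R p \<in> K_int"
proof -
  let ?U = "(\<lambda>z. inverse c *\<^sub>R z) -` K_int"
  have "c_open conv ?U"
    by (intro c_open_vimage c_open_c_interior conv_space_scaleR[OF conv_space])
  moreover have "?U \<subseteq> K"
  proof
    fix z assume "z \<in> ?U"
    then have "inverse c *\<^sub>R z \<in> K"
      using K_int_subset by blast
    moreover have "z = c *\<^sub>R (inverse c *\<^sub>R z)"
      using \<open>0 < c\<close> by simp
    ultimately show "z \<in> K"
      using K_scaleR \<open>0 < c\<close> by (metis less_imp_le)
  qed
  ultimately have "?U \<subseteq> K_int" by (rule c_interior_maximal[rotated])
  then show ?thesis using assms by auto
qed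

lemma lt_trans: "lt a b \<Longrightarrow> lt b c \<Longrightarrow> lt a c"
  unfolding lt_iff using K_int_add[of "c - b" "b - a"] by simp

lemma eventually_perturb_K_int:
  assumes "p \<in> K_int" "t \<longlonglongrightarrow> 0"
  shows "\<forall>\<^sub>F n in sequentially. p + t n *\<^sub>R e \<in> K_int"
  using c_openD[OF c_open_c_interior conv_space_perturb[OF conv_space assms(2)] assms(1)] .

lemma perturb_not_in_K_int:
  assumes "d \<notin> K"
  shows "\<exists>r>0. d + r *\<^sub>R e \<notin> K_int"
proof (rule ccontr)
  assume "\<not> ?thesis"
  moreover have "0 < inverse (real (Suc n))" for n
    by simp
  ultimately have "d + inverse (real (Suc n)) *\<^sub>R e \<in> K_int" for n
    by blast
  then have "d + inverse (real (Suc n)) *\<^sub>R e \<in> K" for n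
    using K_int_subset by blast
  with K_closed conv_space_perturb[OF conv_space LIMSEQ_inverse_real_of_nat]
  have "d \<in> K" by blast
  with assms show False ..
qed

lemma centre_in_open_interval:
  assumes "e \<in> K_int" "0 < r"
  shows "x \<in> open_interval lt (x - r *\<^sub>R e) (x + r *\<^sub>R e)"
proof -
  have "x - (x - r *\<^sub>R e) = r *\<^sub>R e" "(x + r *\<^sub>R e) - x = r *\<^sub>R e"
    by simp_all
  with K_int_scaleR[OF assms(2,1)] show ?thesis
    unfolding open_interval_def lt_iff by (simp only: mem_Collect_eq)
qed

lemma open_interval_in_intervals:
  assumes "e \<in> K_int" "0 < r"
  shows "open_interval lt (x - r *\<^sub>R e) (x + r *\<^sub>R e) \<in> intervals"
  using centre_in_open_interval[OF assms] lt_trans[of "x - r *\<^sub>R e" x]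
  unfolding intervals_def open_interval_def by blast

lemma intervals_cover: "\<exists>I\<in>intervals. x \<in> I"
proof -
  obtain e where e: "e \<in> K_int" using K_int_nonempty by blast
  show ?thesis
    using open_interval_in_intervals[OF e zero_less_one] centre_in_open_interval[OF e zero_less_one]
    by blast
qed

lemma open_interval_mono: "lt a a' \<Longrightarrow> lt b' b \<Longrightarrow> open_interval lt a' b' \<subseteq> open_interval lt a b"
  unfolding open_interval_def using lt_trans[of a a'] lt_trans[of _ b' b] by blast

lemma intervals_Int:
  assumes "I \<in> intervals" "J \<in> intervals" "x \<in> I \<inter> J"
  shows "\<exists>V\<in>intervals. x \<in> V \<and> V \<subseteq> I \<inter> J"
proof -
  obtain a b c d where I: "I = open_interval lt a b" and J: "J = open_interval lt c d"
    using assms(1,2) unfolding intervals_def by blast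
  then have "x - a \<in> K_int" "b - x \<in> K_int" "x - c \<in> K_int" "d - x \<in> K_int"
    using assms(3) unfolding open_interval_def lt_iff by auto
  obtain e where e: "e \<in> K_int" using K_int_nonempty by blast
  have "(\<lambda>n. - inverse (real (Suc n))) \<longlonglongrightarrow> 0"
    using tendsto_minus[OF LIMSEQ_inverse_real_of_nat] by simp
  from eventually_perturb_K_int[OF _ this, of _ e]
  have "\<forall>\<^sub>F n in sequentially. x - a + - inverse (real (Suc n)) *\<^sub>R e \<in> K_int \<and>
      b - x + - inverse (real (Suc n)) *\<^sub>R e \<in> K_int \<and>
      x - c + - inverse (real (Suc n)) *\<^sub>R e \<in> K_int \<and>
      d - x + - inverse (real (Suc n)) *\<^sub>R e \<in> K_int"
    using \<open>x - a \<in> K_int\<close> \<open>b - x \<in> K_int\<close> \<open>x - c \<in> K_int\<close> \<open>d - x \<in> K_int\<close>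
    by (intro eventually_conj)
  then obtain n where n: "x - a + - inverse (real (Suc n)) *\<^sub>R e \<in> K_int"
      "b - x + - inverse (real (Suc n)) *\<^sub>R e \<in> K_int"
      "x - c + - inverse (real (Suc n)) *\<^sub>R e \<in> K_int"
      "d - x + - inverse (real (Suc n)) *\<^sub>R e \<in> K_int"
    using eventually_happens'[OF sequentially_bot] by blast
  define r where "r = inverse (real (Suc n))"
  have "0 < r" unfolding r_def by simp
  have "lt a (x - r *\<^sub>R e)" "lt (x + r *\<^sub>R e) b" "lt c (x - r *\<^sub>R e)" "lt (x + r *\<^sub>R e) d"
    using n unfolding lt_iff r_def by (simp_all add: algebra_simps)
  then have "open_interval lt (x - r *\<^sub>R e) (x + r *\<^sub>R e) \<subseteq> I \<inter> J"
    unfolding I J using open_interval_mono by blast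
  with open_interval_in_intervals[OF e \<open>0 < r\<close>] centre_in_open_interval[OF e \<open>0 < r\<close>]
  show ?thesis by blast
qed

lemma open_interval_disjoint: "\<not> lt a d \<Longrightarrow> open_interval lt a b \<inter> open_interval lt c d = {}"
  unfolding open_interval_def using lt_trans[of a _ d] by blast

lemma intervals_separate_not_K:
  assumes "u - v \<notin> K"
  shows "\<exists>I\<in>intervals. \<exists>J\<in>intervals. u \<in> I \<and> v \<in> J \<and> I \<inter> J = {}"
proof -
  obtain e where e: "e \<in> K_int" using K_int_nonempty by blast
  obtain r where "0 < r" and r: "u - v + r *\<^sub>R e \<notin> K_int"
    using perturb_not_in_K_int[OF assms] by blast
  define s where "s = r / 2"
  have "0 < s" using \<open>0 < r\<close> unfolding s_def by simp
  have "(u + s *\<^sub>R e) - (v - s *\<^sub>R e) = u - v + (s *\<^sub>R e + s *\<^sub>R e)"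
    by (simp add: algebra_simps)
  also have "\<dots> = u - v + r *\<^sub>R e"
    unfolding s_def by (simp flip: scaleR_add_left)
  finally have "\<not> lt (v - s *\<^sub>R e) (u + s *\<^sub>R e)"
    unfolding lt_iff using r by metis
  then have "open_interval lt (v - s *\<^sub>R e) (v + s *\<^sub>R e) \<inter>
      open_interval lt (u - s *\<^sub>R e) (u + s *\<^sub>R e) = {}"
    by (rule open_interval_disjoint)
  then show ?thesis
    using open_interval_in_intervals[OF e \<open>0 < s\<close>, of u] open_interval_in_intervals[OF e \<open>0 < s\<close>, of v]
      centre_in_open_interval[OF e \<open>0 < s\<close>, of u] centre_in_open_interval[OF e \<open>0 < s\<close>, of v]
    by blast
qed

lemma intervals_separate:
  assumes "x \<noteq> y"
  shows "\<exists>I\<in>intervals. \<exists>J\<in>intervals. x \<in> I \<and> y \<in> J \<and> I \<inter> J = {}"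
proof (cases "x - y \<in> K")
  case True
  have "y - x \<notin> K"
  proof
    assume "y - x \<in> K"
    then have "x - y = 0"
      using K_antisym[OF True] by (simp only: minus_diff_eq)
    with assms show False by simp
  qed
  then show ?thesis
    using intervals_separate_not_K[of y x] by blast
next
  case False
  then show ?thesis
    by (rule intervals_separate_not_K)
qed

end

theorem theorem6p2:
  fixes conv :: "(nat \<Rightarrow> 'a::real_vector) \<Rightarrow> 'a \<Rightarrow> bool"
    and le lt :: "'a \<Rightarrow> 'a \<Rightarrow> bool"
  assumes "solid_vector_space conv le lt"
  defines "\<B> \<equiv> {open_interval lt a b | a b. lt a b}"
  shows "\<exists>T. topspace T = UNIV \<and>
             (\<forall>U. openin T U \<longleftrightarrow> (\<exists>\<U>. \<U> \<subseteq> \<B> \<and> U = \<Union>\<U>)) \<and>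
             Hausdorff_space T"
proof -
  interpret solid_space conv le lt
    using assms(1) by unfold_locales
  have "\<B> = intervals"
    unfolding \<B>_def intervals_def ..
  show ?thesis
    unfolding \<open>\<B> = intervals\<close>
    by (rule Hausdorff_topology_from_basis[OF intervals_Int intervals_cover intervals_separate])
qed

end
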